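(* Let $\mathcal A_+,\mathcal A_-\subseteq\mathbb Z^n$ be disjoint nonempty finite sets, $\mathcal A=\mathcal A_+\cup\mathcal A_-$, such that $\mathcal A_-\subseteq\operatorname{relint}(\Gamma)$ for a face $\Gamma$ of $\operatorname{conv}(\mathcal A_+)$ and $(\mathcal A_+\cap\Gamma,\mathcal A_-\cap\Gamma)$ is nonseparable. Let $f\in\mathcal S(\mathcal A_+,\mathcal A_-)$ have nonsigned coefficients $c\in\mathbb R^{\mathcal A}_{>0}$ and let $h:\mathcal A\to\mathbb Z$ be a height function lifting $\mathcal A_-$. Then the set $S:=\{t\in\mathbb R_{>0}:F^\Gamma(\pi_\Gamma(c\star t^h),x)=0\text{ for some }x\in\mathbb R^n_{>0}\}$ has exactly one element.
   Context: A signomial with signed support $(\mathcal A_+,\mathcal A_-)$ is $f_c(x)=\sum_{a\in\mathcal A_+}c_ax^a-\sum_{b\in\mathcal A_-}c_bx^b$ on $\mathbb R^n_{>0}$, $c\in\mathbb R^{\mathcal A}_{>0}$ (nonsigned coefficients); $\mathcal S(\mathcal A_+,\mathcal A_-)$ is the set of these. For a signed support $(\mathcal B_+,\mathcal B_-)$ the critical system is $F(c,x)=(f_c(x),x_1\partial_{x_1}f_c(x),\dots,x_n\partial_{x_n}f_c(x))$. $\pi_\Gamma:\mathbb R^{\mathcal A}\to\mathbb R^{\mathcal A\cap\Gamma}$ is the coordinate projection and $F^\Gamma$ the critical system of $(\mathcal A_+\cap\Gamma,\mathcal A_-\cap\Gamma)$. A height function $h$ lifts $\mathcal A_-$ if $h(a)>0$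 for $a\in\mathcal A_-$, $h(a)=0$ for $a\in\mathcal A_+$; $c\star t^h=(c_at^{h(a)})_a$. For $(\mathcal B_+,\mathcal B_-)$ of dimension $d=\dim\operatorname{conv}(\mathcal B_+\cup\mathcal B_-)$: $\mathcal F(\mathcal B_+)$ is the common refinement of all regular polyhedral subdivisions of $\mathcal B_+$, $\mathcal F_d(\mathcal B_+)$ its $d$-cells, and $(\mathcal B_+,\mathcal B_-)$ is nonseparable if $\mathcal B_-\subseteq\operatorname{relint}\operatorname{conv}(\mathcal B_+)$ and some $D\in\mathcal F_d(\mathcal B_+)$ contains $\mathcal B_-$. *)

theory Defs
  imports "HOL-Analysis.Analysis"
begin

definition rv :: "int ^ 'n \<Rightarrow> real ^ 'n" where
  "rv a = (\<chi> i. real_of_int (a $ i))"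

definition monom :: "int ^ 'n \<Rightarrow> real ^ 'n \<Rightarrow> real" where
  "monom a x = (\<Prod>i\<in>UNIV. (x $ i) powr real_of_int (a $ i))"

definition signomial :: "(int ^ 'n) set \<Rightarrow> (int ^ 'n) set \<Rightarrow> (int ^ 'n \<Rightarrow> real) \<Rightarrow> real ^ 'n \<Rightarrow> real" where
  "signomial Ap Am c x = (\<Sum>a\<in>Ap. c a * monom a x) - (\<Sum>b\<in>Am. c b * monom b x)"

definition xpartial :: "(real ^ 'n \<Rightarrow> real) \<Rightarrow> 'n \<Rightarrow> real ^ 'n \<Rightarrow> real" where
  "xpartial f i x = x $ i * deriv (\<lambda>s. f (\<chi> j. if j = i then s else x $ j)) (x $ i)"

definition crit_system_zero :: "(int ^ 'n) set \<Rightarrow> (int ^ 'n) set \<Rightarrow> (int ^ 'n \<Rightarrow> real) \<Rightarrow> real ^ 'n \<Rightarrow> bool" where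
  "crit_system_zero Bp Bm c x \<longleftrightarrow>
     signomial Bp Bm c x = 0 \<and> (\<forall>i. xpartial (signomial Bp Bm c) i x = 0)"

definition lifts :: "(int ^ 'n \<Rightarrow> int) \<Rightarrow> (int ^ 'n) set \<Rightarrow> (int ^ 'n) set \<Rightarrow> bool" where
  "lifts h Ap Am \<longleftrightarrow> (\<forall>a\<in>Am. h a > 0) \<and> (\<forall>a\<in>Ap. h a = 0)"

text \<open>Cells (all faces) of the regular subdivision of the point configuration B induced by the
  height w: projections of the lower faces of the lifted configuration.\<close>
definition reg_cells :: "(real ^ 'n) set \<Rightarrow> (real ^ 'n \<Rightarrow> real) \<Rightarrow> (real ^ 'n) set set" where
  "reg_cells B w = {convex hull {b\<in>B. \<forall>b'\<in>B. w b - v \<bullet> b \<le> w b' - v \<bullet> b'} | v. True}"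

definition refinement_cells :: "(real ^ 'n) set \<Rightarrow> (real ^ 'n) set set" where
  "refinement_cells B = {D. D \<noteq> {} \<and>
      (\<exists>C. (\<forall>w. C w \<in> reg_cells B w) \<and> D = \<Inter> (range C))}"

definition nonseparable :: "(int ^ 'n) set \<Rightarrow> (int ^ 'n) set \<Rightarrow> bool" where
  "nonseparable Bp Bm \<longleftrightarrow>
     rv ` Bm \<subseteq> rel_interior (convex hull (rv ` Bp)) \<and>
     (\<exists>D\<in>refinement_cells (rv ` Bp).
        aff_dim D = aff_dim (convex hull (rv ` (Bp \<union> Bm))) \<and> rv ` Bm \<subseteq> D)"

end

(*
  Write f_t for the signomial on the face with coefficients c \<star> t^h. The coefficients on A_- grow
  strictly with t while those on A_+ stay fixed, so f_t(x) is strictly decreasing in t.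

  Uniqueness: at a positive critical zero x0 of f_t the weights l_a = c_a x0^a are balanced (equal
  total mass and equal barycentre on both sides). In logarithmic coordinates around x0, f_t becomes
  the sum of l_a exp <a,y> over A_+ minus the same sum over A_-. The cell of the common refinement
  that contains A_- lies in a cell of the regular subdivision induced by the convex height
  p \<mapsto> exp <p,y>, so some affine function lies below that height on A_+ and above it on A_-.
  Balancing turns this into f_t \<ge> 0: critical zeros are global minima. Two levels s < t would give
  0 \<le> f_t(x_s) < f_s(x_s) = 0.

  Existence: moving y orthogonally to the direction space L of aff A_+ rescales f_t by a positive
  factor, so only y \<in> L matters. Since A_- lies in the relative interior of conv A_+, every b in A_-
  is beaten by some a in A_+ by a margin e |y| on L, hence f_t > 0 on L for small t or large |y|.
  By compactness there is a least t at which f_t takes a nonpositive value on L; there f_t \<ge> 0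
  has a zero, a global minimum and hence a critical point.
*)

theory Submission
  imports Defs
begin

definition ln_vec :: "real ^ 'n \<Rightarrow> real ^ 'n" where
  "ln_vec x = (\<chi> i. ln (x $ i))"

definition exp_vec :: "real ^ 'n \<Rightarrow> real ^ 'n" where
  "exp_vec y = (\<chi> i. exp (y $ i))"

lemma exp_vec_pos: "exp_vec y $ i > 0"
  by (simp add: exp_vec_def)

lemma ln_vec_exp_vec [simp]: "ln_vec (exp_vec y) = y"
  by (simp add: ln_vec_def exp_vec_def vec_eq_iff)

lemma monom_eq_exp_inner:
  assumes "\<forall>i. x $ i > 0"
  shows "monom a x = exp (rv a \<bullet> ln_vec x)"
proof -
  have "x $ i powr real_of_int (a $ i) = exp (real_of_int (a $ i) * ln (x $ i))" for i
    using assms[rule_format, of i] by (simp add: powr_def)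
  then have "monom a x = (\<Prod>i\<in>UNIV. exp (real_of_int (a $ i) * ln (x $ i)))"
    by (simp add: monom_def)
  also have "\<dots> = exp (rv a \<bullet> ln_vec x)"
    by (simp add: exp_sum inner_vec_def rv_def ln_vec_def)
  finally show ?thesis .
qed

definition exp_sum :: "(int ^ 'n) set \<Rightarrow> (int ^ 'n \<Rightarrow> real) \<Rightarrow> real ^ 'n \<Rightarrow> real" where
  "exp_sum A w y = (\<Sum>a\<in>A. w a * exp (rv a \<bullet> y))"

lemma signomial_eq_exp_sum:
  assumes "\<forall>i. x $ i > 0"
  shows "signomial P M d x = exp_sum P d (ln_vec x) - exp_sum M d (ln_vec x)"
  by (simp add: signomial_def exp_sum_def monom_eq_exp_inner[OF assms])

lemma monom_coord_update:
  "monom a (\<chi> j. if j = i then s else x $ j) =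
     s powr real_of_int (a $ i) * (\<Prod>j\<in>UNIV - {i}. x $ j powr real_of_int (a $ j))"
  unfolding monom_def by (subst prod.remove[of _ i]) (auto intro!: prod.cong)

lemma has_real_derivative_monom_coord:
  assumes "\<forall>j. x $ j > 0"
  shows "((\<lambda>s. monom a (\<chi> j. if j = i then s else x $ j)) has_real_derivative
           real_of_int (a $ i) * monom a x / x $ i) (at (x $ i))"
proof -
  define r where "r = real_of_int (a $ i)"
  define K where "K = (\<Prod>j\<in>UNIV - {i}. x $ j powr real_of_int (a $ j))"
  have xi: "x $ i > 0" using assms by simp
  have "(\<chi> j. if j = i then x $ i else x $ j) = x"
    by (simp add: vec_eq_iff)
  then have "monom a x = x $ i powr r * K"
    using monom_coord_update[of a i "x $ i" x] by (simp add: r_def K_def)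
  then have "r * x $ i powr (r - 1) * K = r * monom a x / x $ i"
    using xi by (simp add: powr_diff)
  moreover have "((\<lambda>s. s powr r * K) has_real_derivative r * x $ i powr (r - 1) * K) (at (x $ i))"
    using xi by (auto intro!: derivative_eq_intros)
  ultimately show ?thesis
    by (simp add: monom_coord_update r_def K_def)
qed

lemma has_real_derivative_signomial_coord:
  assumes "\<forall>j. x $ j > 0" and "finite P" "finite M"
  shows "((\<lambda>s. signomial P M d (\<chi> j. if j = i then s else x $ j)) has_real_derivative
           signomial P M (\<lambda>a. d a * real_of_int (a $ i)) x / x $ i) (at (x $ i))"
  unfolding signomial_def diff_divide_distrib sum_divide_distrib
  by (intro DERIV_diff DERIV_sum)
     (auto intro!: DERIV_cmult[THEN DERIV_cong] has_real_derivative_monom_coord assms)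

lemma xpartial_signomial:
  assumes "\<forall>j. x $ j > 0" and "finite P" "finite M"
  shows "xpartial (signomial P M d) i x = signomial P M (\<lambda>a. d a * real_of_int (a $ i)) x"
  using DERIV_imp_deriv[OF has_real_derivative_signomial_coord[OF assms]] assms(1)
  by (simp add: xpartial_def less_imp_neq[symmetric])

lemma crit_system_zero_if_global_min:
  assumes pos: "\<forall>j. x $ j > 0" and fin: "finite P" "finite M"
    and zero: "signomial P M d x = 0"
    and min: "\<And>z. \<forall>j. z $ j > 0 \<Longrightarrow> signomial P M d z \<ge> 0"
  shows "crit_system_zero P M d x"
  unfolding crit_system_zero_def
proof (intro conjI allI)
  fix i
  have xi: "x $ i > 0" using pos by simp
  have "signomial P M (\<lambda>a. d a * real_of_int (a $ i)) x / x $ i = 0"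
  proof (rule DERIV_local_min[OF has_real_derivative_signomial_coord[OF pos fin] xi], intro allI impI)
    fix s assume "\<bar>x $ i - s\<bar> < x $ i"
    then have "\<forall>j. (\<chi> j. if j = i then s else x $ j) $ j > 0"
      using pos by auto
    moreover have "(\<chi> j. if j = i then x $ i else x $ j) = x"
      by (simp add: vec_eq_iff)
    ultimately show "signomial P M d (\<chi> j. if j = i then x $ i else x $ j)
                     \<le> signomial P M d (\<chi> j. if j = i then s else x $ j)"
      using min zero by simp
  qed
  then show "xpartial (signomial P M d) i x = 0"
    using xi by (simp add: xpartial_signomial[OF pos fin])
qed (fact zero)

lemma crit_system_zero_balanced:
  assumes "\<forall>j. x $ j > 0" and "finite P" "finite M" and "crit_system_zero P M d x"
  shows "(\<Sum>a\<in>P. d a * monom a x) = (\<Sum>b\<in>M. d b * monom b x)"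
    and "(\<Sum>a\<in>P. (d a * monom a x) *\<^sub>R rv a) = (\<Sum>b\<in>M. (d b * monom b x) *\<^sub>R rv b)"
  using assms(4)
  by (auto simp: crit_system_zero_def xpartial_signomial[OF assms(1-3)] signomial_def
      vec_eq_iff sum_component rv_def mult_ac)

lemma convex_on_exp_inner: "convex_on UNIV (\<lambda>p. exp (p \<bullet> y))"
proof (rule convex_onI)
  fix t :: real and p q :: 'a
  assume "0 < t" "t < 1"
  then show "exp (((1 - t) *\<^sub>R p + t *\<^sub>R q) \<bullet> y) \<le> (1 - t) * exp (p \<bullet> y) + t * exp (q \<bullet> y)"
    using convex_onD[OF exp_convex, of t "p \<bullet> y" "q \<bullet> y"] by (simp add: inner_add_left)
qed simp

lemma convex_sublevel_minus_inner:
  assumes "convex_on UNIV w"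
  shows "convex {p. w p - v \<bullet> p \<le> m}"
proof (rule convexI)
  fix p q :: 'a and s t :: real
  assume p: "p \<in> {p. w p - v \<bullet> p \<le> m}" and q: "q \<in> {p. w p - v \<bullet> p \<le> m}"
    and st: "0 \<le> s" "0 \<le> t" "s + t = 1"
  have "w (s *\<^sub>R p + t *\<^sub>R q) \<le> s * w p + t * w q"
    using convex_onD[OF assms, of t p q] st by (simp add: eq_diff_eq[symmetric])
  moreover have "s * (w p - v \<bullet> p) + t * (w q - v \<bullet> q) \<le> s * m + t * m"
    using p q st by (intro add_mono mult_left_mono) auto
  moreover have "s * m + t * m = m"
    using st by (simp flip: distrib_right)
  ultimately show "s *\<^sub>R p + t *\<^sub>R q \<in> {p. w p - v \<bullet> p \<le> m}"
    by (simp add: inner_add_right algebra_simps)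
qed

lemma reg_cell_supporting_affine:
  assumes "convex_on UNIV w" and "C \<in> reg_cells B w" and "C \<noteq> {}"
  obtains v m where "\<forall>b\<in>B. m + v \<bullet> b \<le> w b" and "\<forall>p\<in>C. w p \<le> m + v \<bullet> p"
proof -
  obtain v where C: "C = convex hull {b\<in>B. \<forall>b'\<in>B. w b - v \<bullet> b \<le> w b' - v \<bullet> b'}"
    using assms(2) unfolding reg_cells_def by blast
  with assms(3) have "{b\<in>B. \<forall>b'\<in>B. w b - v \<bullet> b \<le> w b' - v \<bullet> b'} \<noteq> {}"
    by auto
  then obtain f where f: "f \<in> B" "\<forall>b\<in>B. w f - v \<bullet> f \<le> w b - v \<bullet> b"
    by blast
  define m where "m = w f - v \<bullet> f"
  have "C \<subseteq> {p. w p - v \<bullet> p \<le> m}"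
    unfolding C m_def
    by (intro hull_minimal convex_sublevel_minus_inner[OF assms(1)]) (use f(1) in auto)
  then show thesis
    using f by (intro that[of m v]) (auto simp: m_def)
qed

lemma refinement_cell_subset_reg_cell:
  assumes "D \<in> refinement_cells B"
  obtains C where "C \<in> reg_cells B w" and "D \<subseteq> C"
proof -
  obtain Cs where "\<forall>w. Cs w \<in> reg_cells B w" and "D = \<Inter> (range Cs)"
    using assms unfolding refinement_cells_def by blast
  then show thesis
    by (intro that[of "Cs w"]) auto
qed

lemma balanced_weighted_sum_le:
  fixes q :: "'a \<Rightarrow> 'b::real_inner"
  assumes "finite P" "finite M" and l: "\<forall>a\<in>P \<union> M. l a \<ge> 0"
    and bal: "sum l P = sum l M" "(\<Sum>a\<in>P. l a *\<^sub>R q a) = (\<Sum>b\<in>M. l b *\<^sub>R q b)"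
    and below: "\<forall>a\<in>P. m + v \<bullet> q a \<le> \<phi> a" and above: "\<forall>b\<in>M. \<phi> b \<le> m + v \<bullet> q b"
  shows "(\<Sum>b\<in>M. l b * \<phi> b) \<le> (\<Sum>a\<in>P. l a * \<phi> a)"
proof -
  have "(\<Sum>b\<in>M. l b * \<phi> b) \<le> (\<Sum>b\<in>M. l b * (m + v \<bullet> q b))"
    using l above by (intro sum_mono mult_left_mono) auto
  also have "\<dots> = m * sum l M + v \<bullet> (\<Sum>b\<in>M. l b *\<^sub>R q b)"
    by (simp add: algebra_simps sum.distrib sum_distrib_left inner_sum_right)
  also have "\<dots> = (\<Sum>a\<in>P. l a * (m + v \<bullet> q a))"
    by (simp add: bal[symmetric] algebra_simps sum.distrib sum_distrib_left inner_sum_right)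
  also have "\<dots> \<le> (\<Sum>a\<in>P. l a * \<phi> a)"
    using l below by (intro sum_mono mult_left_mono) auto
  finally show ?thesis .
qed

lemma nonseparable_signomial_nonneg:
  assumes fin: "finite P" "finite M" and d: "\<forall>a\<in>P \<union> M. d a \<ge> 0"
    and ns: "nonseparable P M"
    and x0: "\<forall>j. x0 $ j > 0" "crit_system_zero P M d x0"
    and x: "\<forall>j. x $ j > 0"
  shows "signomial P M d x \<ge> 0"
proof -
  define l where "l a = d a * monom a x0" for a
  define \<phi> where "\<phi> p = exp (p \<bullet> (ln_vec x - ln_vec x0))" for p
  have "monom a x = monom a x0 * \<phi> (rv a)" for a
    by (simp add: monom_eq_exp_inner x x0(1) \<phi>_def inner_diff_right exp_diff)
  then have sig: "signomial P M d x = (\<Sum>a\<in>P. l a * \<phi> (rv a)) - (\<Sum>b\<in>M. l b * \<phi> (rv b))"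
    by (simp add: signomial_def l_def mult.assoc)
  have l: "\<forall>a\<in>P \<union> M. l a \<ge> 0"
    using d by (simp add: l_def monom_eq_exp_inner[OF x0(1)])
  have bal: "sum l P = sum l M" "(\<Sum>a\<in>P. l a *\<^sub>R rv a) = (\<Sum>b\<in>M. l b *\<^sub>R rv b)"
    using crit_system_zero_balanced[OF x0(1) fin x0(2)] by (simp_all add: l_def)
  obtain D where "D \<in> refinement_cells (rv ` P)" "rv ` M \<subseteq> D"
    using ns unfolding nonseparable_def by blast
  then obtain C where C: "C \<in> reg_cells (rv ` P) \<phi>" "rv ` M \<subseteq> C"
    using refinement_cell_subset_reg_cell by (metis order.trans)
  show ?thesis
  proof (cases "M = {}")
    case True
    then show ?thesis
      unfolding sig using l by (simp add: \<phi>_def sum_nonneg)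
  next
    case False
    have "convex_on UNIV \<phi>"
      unfolding \<phi>_def by (rule convex_on_exp_inner)
    then obtain v m where "\<forall>b\<in>rv ` P. m + v \<bullet> b \<le> \<phi> b" "\<forall>p\<in>C. \<phi> p \<le> m + v \<bullet> p"
      by (rule reg_cell_supporting_affine[OF _ C(1)]) (use C(2) False in auto)
    then have "(\<Sum>b\<in>M. l b * \<phi> (rv b)) \<le> (\<Sum>a\<in>P. l a * \<phi> (rv a))"
      using C(2) by (intro balanced_weighted_sum_le[OF fin l bal]) auto
    then show ?thesis
      by (simp add: sig)
  qed
qed

definition lift_coeffs :: "('a \<Rightarrow> real) \<Rightarrow> ('a \<Rightarrow> int) \<Rightarrow> real \<Rightarrow> 'a \<Rightarrow> real" where
  "lift_coeffs c h t = (\<lambda>a. c a * t powr real_of_int (h a))"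

lemma lift_coeffs_unlifted: "h a = 0 \<Longrightarrow> 0 < t \<Longrightarrow> lift_coeffs c h t a = c a"
  by (simp add: lift_coeffs_def)

lemma lift_coeffs_nonneg: "c a \<ge> 0 \<Longrightarrow> lift_coeffs c h t a \<ge> 0"
  by (simp add: lift_coeffs_def)

lemma lift_coeffs_strict_mono:
  assumes "c a > 0" "h a > 0" "0 < s" "s < t"
  shows "lift_coeffs c h s a < lift_coeffs c h t a"
  using assms by (simp add: lift_coeffs_def powr_less_mono2)

lemma signomial_lift_coeffs_strict_antimono:
  assumes "finite M" "M \<noteq> {}" and "\<forall>b\<in>M. c b > 0 \<and> h b > 0" "\<forall>a\<in>P. h a = 0"
    and "0 < s" "s < t" and "\<forall>j. x $ j > 0"
  shows "signomial P M (lift_coeffs c h t) x < signomial P M (lift_coeffs c h s) x"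
proof -
  have "(\<Sum>b\<in>M. lift_coeffs c h s b * monom b x) < (\<Sum>b\<in>M. lift_coeffs c h t b * monom b x)"
    using assms by (intro sum_strict_mono mult_strict_right_mono lift_coeffs_strict_mono)
      (auto simp: monom_eq_exp_inner)
  moreover have "(\<Sum>a\<in>P. lift_coeffs c h t a * monom a x) = (\<Sum>a\<in>P. lift_coeffs c h s a * monom a x)"
    using assms by (simp add: lift_coeffs_unlifted)
  ultimately show ?thesis
    by (simp add: signomial_def)
qed

lemma crit_zero_level_unique:
  assumes fin: "finite P" "finite M" and "M \<noteq> {}" and ns: "nonseparable P M"
    and c: "\<forall>a\<in>P \<union> M. c a > 0" and h: "\<forall>b\<in>M. h b > 0" "\<forall>a\<in>P. h a = 0"
    and s: "0 < s" "\<forall>j. x $ j > 0" "crit_system_zero P M (lift_coeffs c h s) x"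
    and t: "0 < t" "\<forall>j. z $ j > 0" "crit_system_zero P M (lift_coeffs c h t) z"
  shows "s = t"
proof -
  have "\<not> s' < t'"
    if s': "0 < s'" "\<forall>j. x' $ j > 0" "crit_system_zero P M (lift_coeffs c h s') x'"
      and t': "\<forall>j. z' $ j > 0" "crit_system_zero P M (lift_coeffs c h t') z'" for s' t' x' z'
  proof
    assume "s' < t'"
    have "0 \<le> signomial P M (lift_coeffs c h t') x'"
      using c by (intro nonseparable_signomial_nonneg[OF fin _ ns t' s'(2)])
        (auto intro: lift_coeffs_nonneg less_imp_le)
    also have "\<dots> < signomial P M (lift_coeffs c h s') x'"
      using c h by (intro signomial_lift_coeffs_strict_antimono[OF fin(2) \<open>M \<noteq> {}\<close> _ _ s'(1) \<open>s' < t'\<close> s'(2)]) auto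
    also have "\<dots> = 0"
      using s'(3) by (simp add: crit_system_zero_def)
    finally show False by simp
  qed
  then show ?thesis
    using s t by (meson linorder_neqE_linordered_idom)
qed

lemma rel_interior_inner_gap:
  fixes Q :: "'a::euclidean_space set"
  assumes a0: "a0 \<in> Q" and p: "p \<in> rel_interior (convex hull Q)"
  shows "\<exists>e>0. \<forall>y\<in>span ((\<lambda>x. x - a0) ` Q). \<exists>q\<in>Q. p \<bullet> y + e * norm y \<le> q \<bullet> y"
proof -
  let ?L = "span ((\<lambda>x. x - a0) ` Q)"
  obtain e where e: "e > 0" and ball: "ball p e \<inter> affine hull Q \<subseteq> convex hull Q"
    using p unfolding mem_rel_interior_ball by auto
  have aff: "affine hull Q = (\<lambda>x. a0 + x) ` ?L"
    using affine_hull_span_gen[of a0 Q] a0 by (simp add: hull_inc)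
  have "p \<in> affine hull Q"
    using p rel_interior_subset convex_hull_subset_affine_hull by blast
  then obtain z where z: "z \<in> ?L" "p = a0 + z"
    using aff by auto
  have gap: "\<exists>q\<in>Q. p \<bullet> y + e/2 * norm y \<le> q \<bullet> y" if y: "y \<in> ?L" "y \<noteq> 0" for y
  proof (rule ccontr)
    define p' where "p' = p + (e / 2 / norm y) *\<^sub>R y"
    have "p' \<in> ball p e"
      using e y by (simp add: p'_def dist_norm)
    moreover have "p' \<in> affine hull Q"
      unfolding aff p'_def z(2) using z(1) y(1)
      by (intro image_eqI[of _ _ "z + (e / 2 / norm y) *\<^sub>R y"]) (auto intro: span_add span_mul)
    ultimately have "p' \<in> convex hull Q"
      using ball by auto
    assume "\<not> ?thesis"
    moreover have "p' \<bullet> y = p \<bullet> y + e/2 * norm y"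
      using y by (simp add: p'_def inner_add_left power2_norm_eq_inner[symmetric] power2_eq_square)
    ultimately have "Q \<subseteq> {x. y \<bullet> x < y \<bullet> p'}"
      by (auto simp: inner_commute)
    then have "convex hull Q \<subseteq> {x. y \<bullet> x < y \<bullet> p'}"
      by (intro hull_minimal convex_halfspace_lt)
    with \<open>p' \<in> convex hull Q\<close> show False
      by auto
  qed
  have "\<exists>q\<in>Q. p \<bullet> y + e/2 * norm y \<le> q \<bullet> y" if "y \<in> ?L" for y
    using gap[OF that] a0 by (cases "y = 0") auto
  then show ?thesis
    using e by (intro exI[of _ "e/2"]) auto
qed

lemma finite_rel_interior_inner_gap:
  fixes Q :: "'a::euclidean_space set"
  assumes "finite S" "S \<subseteq> rel_interior (convex hull Q)" and a0: "a0 \<in> Q"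
  shows "\<exists>e>0. \<forall>p\<in>S. \<forall>y\<in>span ((\<lambda>x. x - a0) ` Q). \<exists>q\<in>Q. p \<bullet> y + e * norm y \<le> q \<bullet> y"
  using assms(1,2)
proof (induction S rule: finite_induct)
  case empty
  show ?case using zero_less_one by blast
next
  case (insert p S)
  obtain e1 where e1: "e1 > 0" "\<forall>p\<in>S. \<forall>y\<in>span ((\<lambda>x. x - a0) ` Q). \<exists>q\<in>Q. p \<bullet> y + e1 * norm y \<le> q \<bullet> y"
    using insert by auto
  obtain e2 where e2: "e2 > 0" "\<forall>y\<in>span ((\<lambda>x. x - a0) ` Q). \<exists>q\<in>Q. p \<bullet> y + e2 * norm y \<le> q \<bullet> y"
    using rel_interior_inner_gap[OF a0] insert.prems by blast
  have weaken: "\<exists>q\<in>Q. p' \<bullet> y + min e1 e2 * norm y \<le> q \<bullet> y"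
    if "\<exists>q\<in>Q. p' \<bullet> y + e * norm y \<le> q \<bullet> y" "e = e1 \<or> e = e2" for p' y e
  proof -
    have "min e1 e2 * norm y \<le> e * norm y"
      using that(2) by (auto intro: mult_right_mono)
    then show ?thesis
      using that(1) by (meson add_left_mono order_trans)
  qed
  show ?case
  proof (intro exI[of _ "min e1 e2"] conjI ballI)
    fix p' y
    assume "p' \<in> insert p S" "y \<in> span ((\<lambda>x. x - a0) ` Q)"
    then show "\<exists>q\<in>Q. p' \<bullet> y + min e1 e2 * norm y \<le> q \<bullet> y"
      using e1(2) e2(2) weaken[of _ _ e1] weaken[of _ _ e2] by auto
  qed (use e1 e2 in simp)
qed

lemma affine_hull_inner_eq_shift:
  fixes Q :: "'a::euclidean_space set"
  assumes a0: "a0 \<in> Q"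
  obtains y' where "y' \<in> span ((\<lambda>x. x - a0) ` Q)"
    and "\<And>p. p \<in> affine hull Q \<Longrightarrow> p \<bullet> y = p \<bullet> y' + a0 \<bullet> (y - y')"
proof -
  let ?L = "span ((\<lambda>x. x - a0) ` Q)"
  obtain y' z where y': "y' \<in> ?L" and orth: "\<And>w. w \<in> ?L \<Longrightarrow> orthogonal z w" and yz: "y = y' + z"
    using orthogonal_subspace_decomp_exists by metis
  have aff: "affine hull Q = (\<lambda>x. a0 + x) ` ?L"
    using affine_hull_span_gen[of a0 Q] a0 by (simp add: hull_inc)
  have "p \<bullet> y = p \<bullet> y' + a0 \<bullet> (y - y')" if p: "p \<in> affine hull Q" for p
  proof -
    obtain w where "w \<in> ?L" "p = a0 + w"
      using p aff by auto
    then show ?thesis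
      using orth[of w] yz by (simp add: orthogonal_def inner_add_left inner_add_right inner_commute)
  qed
  with y' show thesis
    by (rule that)
qed

lemma compact_sublevel_least_fst:
  fixes g :: "real \<times> 'a::t2_space \<Rightarrow> real"
  assumes "compact S" "continuous_on S g" "p \<in> S" "g p \<le> 0"
  obtains q where "q \<in> S" "g q \<le> 0" "\<And>r. r \<in> S \<Longrightarrow> g r \<le> 0 \<Longrightarrow> fst q \<le> fst r"
proof -
  define K where "K = S \<inter> g -` {..0}"
  have "closed K"
    unfolding K_def using assms(1,2)
    by (intro continuous_closed_preimage compact_imp_closed closed_atMost)
  then have "compact K"
    using compact_Int_closed[OF assms(1) \<open>closed K\<close>] by (simp add: K_def)
  moreover have "p \<in> K"
    using assms(3,4) by (simp add: K_def)
  ultimately obtain q where "q \<in> K" "\<forall>r\<in>K. fst q \<le> fst r"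
    using continuous_attains_inf[OF _ _ continuous_on_fst[OF continuous_on_id]] by blast
  then show thesis
    by (intro that) (auto simp: K_def)
qed

lemma isCont_nonneg_if_pos_left:
  fixes f :: "real \<Rightarrow> real"
  assumes "isCont f s" "a < s" "\<And>t. a < t \<Longrightarrow> t < s \<Longrightarrow> 0 < f t"
  shows "0 \<le> f s"
proof (rule tendsto_lowerbound)
  show "(f \<longlongrightarrow> f s) (at_left s)"
    by (rule isCont_tendsto_compose[OF assms(1) tendsto_ident_at])
  show "\<forall>\<^sub>F t in at_left s. 0 \<le> f t"
    using eventually_at_left_real[OF assms(2)] by eventually_elim (use assms(3) in force)
qed simp

lemma least_nonpos_level:
  fixes G :: "real \<Rightarrow> 'a::euclidean_space \<Rightarrow> real"
  assumes cont: "continuous_on ({0<..} \<times> UNIV) (\<lambda>(t, y). G t y)" and "closed L"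
    and small: "0 < t1" "\<And>t y. 0 < t \<Longrightarrow> t < t1 \<Longrightarrow> y \<in> L \<Longrightarrow> 0 < G t y"
    and large: "\<And>t y. 0 < t \<Longrightarrow> t \<le> T \<Longrightarrow> y \<in> L \<Longrightarrow> R < norm y \<Longrightarrow> 0 < G t y"
    and top: "0 < T" "y0 \<in> L" "G T y0 \<le> 0"
  obtains ts ys where "0 < ts" "ys \<in> L" "G ts ys \<le> 0"
    and "\<And>t y. 0 < t \<Longrightarrow> t < ts \<Longrightarrow> y \<in> L \<Longrightarrow> 0 < G t y"
proof -
  define S where "S = {t1..T} \<times> (cball 0 R \<inter> L)"
  have "t1 \<le> T" "norm y0 \<le> R"
    using small large top by force+
  then have "(T, y0) \<in> S"
    using top by (simp add: S_def)
  have "compact S"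
    unfolding S_def using \<open>closed L\<close> by (intro compact_Times compact_Int_closed) auto
  moreover have "S \<subseteq> {0<..} \<times> UNIV"
    using small by (auto simp: S_def)
  then have "continuous_on S (\<lambda>r. G (fst r) (snd r))"
    using continuous_on_subset[OF cont] by (simp add: case_prod_unfold)
  ultimately obtain q where q: "q \<in> S" "G (fst q) (snd q) \<le> 0"
    and least: "\<And>r. r \<in> S \<Longrightarrow> G (fst r) (snd r) \<le> 0 \<Longrightarrow> fst q \<le> fst r"
    using compact_sublevel_least_fst[of S "\<lambda>r. G (fst r) (snd r)" "(T, y0)"] \<open>(T, y0) \<in> S\<close> top(3)
    by auto
  define ts ys where "ts = fst q" and "ys = snd q"
  have "t1 \<le> ts" "ts \<le> T" "ys \<in> L" "G ts ys \<le> 0"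
    using q by (auto simp: S_def ts_def ys_def mem_Times_iff)
  then have "0 < ts"
    using small(1) by linarith
  have below: "0 < G t y" if "0 < t" "t < ts" "y \<in> L" for t y
  proof (cases "t < t1 \<or> R < norm y")
    case True
    then show ?thesis
      using small(2)[OF that(1) _ that(3)] large[OF that(1) _ that(3)] that(2) \<open>ts \<le> T\<close>
      by (meson order.strict_implies_order order.strict_trans2)
  next
    case False
    then have "(t, y) \<in> S"
      using that \<open>ts \<le> T\<close> by (simp add: S_def)
    then have "\<not> G t y \<le> 0"
      using least[of "(t, y)"] \<open>t < ts\<close> by (auto simp: ts_def)
    then show ?thesis
      by simp
  qed
  with \<open>0 < ts\<close> \<open>ys \<in> L\<close> \<open>G ts ys \<le> 0\<close> show thesis
    by (rule that)
qed

lemma least_level_with_zero: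
  fixes G :: "real \<Rightarrow> 'a::euclidean_space \<Rightarrow> real"
  assumes cont: "continuous_on ({0<..} \<times> UNIV) (\<lambda>(t, y). G t y)" and "closed L"
    and small: "0 < t1" "\<And>t y. 0 < t \<Longrightarrow> t < t1 \<Longrightarrow> y \<in> L \<Longrightarrow> 0 < G t y"
    and large: "\<And>t y. 0 < t \<Longrightarrow> t \<le> T \<Longrightarrow> y \<in> L \<Longrightarrow> R < norm y \<Longrightarrow> 0 < G t y"
    and top: "0 < T" "y0 \<in> L" "G T y0 \<le> 0"
  shows "\<exists>t>0. \<exists>y\<in>L. G t y = 0 \<and> (\<forall>y\<in>L. 0 \<le> G t y)"
proof -
  obtain ts ys where "0 < ts" "ys \<in> L" "G ts ys \<le> 0"
    and below: "\<And>t y. 0 < t \<Longrightarrow> t < ts \<Longrightarrow> y \<in> L \<Longrightarrow> 0 < G t y"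
    using least_nonpos_level[OF assms] by blast
  have nonneg: "0 \<le> G ts y" if "y \<in> L" for y
  proof (rule isCont_nonneg_if_pos_left[OF _ \<open>0 < ts\<close>])
    have "continuous_on {0<..} ((\<lambda>(t, y). G t y) \<circ> (\<lambda>t. (t, y)))"
      by (intro continuous_on_compose continuous_on_subset[OF cont]) (auto intro!: continuous_intros)
    then show "isCont (\<lambda>t. G t y) ts"
      using \<open>ts > 0\<close> by (simp add: o_def continuous_on_eq_continuous_at)
    show "0 < G t y" if "0 < t" "t < ts" for t
      using below that \<open>y \<in> L\<close> by blast
  qed
  then have "G ts ys = 0"
    using \<open>ys \<in> L\<close> \<open>G ts ys \<le> 0\<close> by fastforce
  with \<open>0 < ts\<close> \<open>ys \<in> L\<close> nonneg show ?thesis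
    by (intro exI[of _ ts] conjI bexI[of _ ys]) auto
qed

lemma exp_sum_shift:
  assumes "\<forall>a\<in>A. rv a \<bullet> y = rv a \<bullet> y' + r"
  shows "exp_sum A w y = exp r * exp_sum A w y'"
  unfolding exp_sum_def sum_distrib_left using assms by (intro sum.cong) (simp_all add: exp_add)

lemma exp_sum_le_if_le_on_direction:
  assumes a0: "a0 \<in> P" and M: "rv ` M \<subseteq> affine hull (rv ` P)"
    and le: "\<forall>y\<in>span ((\<lambda>x. x - rv a0) ` rv ` P). exp_sum M w y \<le> exp_sum P c y"
  shows "exp_sum M w y \<le> exp_sum P c y"
proof -
  obtain y' where y': "y' \<in> span ((\<lambda>x. x - rv a0) ` rv ` P)"
    and shift: "\<And>p. p \<in> affine hull (rv ` P) \<Longrightarrow> p \<bullet> y = p \<bullet> y' + rv a0 \<bullet> (y - y')"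
    using affine_hull_inner_eq_shift[of "rv a0" "rv ` P"] a0 by blast
  have shifted: "exp_sum A w' y = exp (rv a0 \<bullet> (y - y')) * exp_sum A w' y'"
    if "rv ` A \<subseteq> affine hull (rv ` P)" for A w'
    using that by (intro exp_sum_shift ballI shift) blast
  have "exp_sum M w y' \<le> exp_sum P c y'"
    using le y' by blast
  then show ?thesis
    using shifted[OF M] shifted[OF hull_subset] by simp
qed

lemma exp_sum_less_if_gap:
  assumes "finite P" "finite M" "M \<noteq> {}" and c: "\<forall>a\<in>P. cmin \<le> c a" and w: "\<forall>b\<in>M. 0 \<le> w b"
    and gap: "\<forall>b\<in>M. \<exists>a\<in>P. rv b \<bullet> y + e * norm y \<le> rv a \<bullet> y"
    and small: "sum w M < cmin * exp (e * norm y)"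
  shows "exp_sum M w y < exp_sum P c y"
proof -
  define m where "m = Max ((\<lambda>b. rv b \<bullet> y) ` M)"
  have "m \<in> (\<lambda>b. rv b \<bullet> y) ` M"
    unfolding m_def using assms(2,3) by (intro Max_in) auto
  moreover have "\<forall>b\<in>M. rv b \<bullet> y \<le> m"
    unfolding m_def using assms(2) by (auto intro!: Max_ge)
  ultimately obtain b1 where b1: "b1 \<in> M" "\<forall>b\<in>M. rv b \<bullet> y \<le> rv b1 \<bullet> y"
    by auto
  obtain a1 where a1: "a1 \<in> P" "rv b1 \<bullet> y + e * norm y \<le> rv a1 \<bullet> y"
    using gap b1(1) by blast
  have "0 \<le> sum w M"
    using w by (simp add: sum_nonneg)
  then have "0 < cmin * exp (e * norm y)"
    using small by linarith
  then have "cmin > 0"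
    by (simp add: zero_less_mult_iff)
  then have cpos: "\<forall>a\<in>P. 0 < c a"
    using c by (metis less_le_trans)
  have "exp_sum M w y \<le> sum w M * exp (rv b1 \<bullet> y)"
    unfolding exp_sum_def sum_distrib_right using b1 w by (intro sum_mono mult_left_mono) auto
  also have "\<dots> < cmin * exp (e * norm y) * exp (rv b1 \<bullet> y)"
    using small by simp
  also have "\<dots> = cmin * exp (rv b1 \<bullet> y + e * norm y)"
    by (simp add: exp_add)
  also have "\<dots> \<le> c a1 * exp (rv a1 \<bullet> y)"
    using a1 c \<open>cmin > 0\<close> by (intro mult_mono) auto
  also have "\<dots> \<le> exp_sum P c y"
    unfolding exp_sum_def using a1(1) cpos assms(1) by (intro member_le_sum) (auto simp: less_imp_le)
  finally show ?thesis .
qed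

lemma sum_lift_coeffs_mono:
  assumes "\<forall>b\<in>M. c b \<ge> 0 \<and> h b \<ge> 0" and "0 < s" "s \<le> t"
  shows "sum (lift_coeffs c h s) M \<le> sum (lift_coeffs c h t) M"
  unfolding lift_coeffs_def using assms by (intro sum_mono mult_left_mono powr_mono2) auto

lemma sum_lift_coeffs_small:
  assumes "finite M" "\<forall>b\<in>M. h b > 0" and "\<delta> > 0"
  obtains t where "t > 0" "sum (lift_coeffs c h t) M < \<delta>"
proof -
  have "((\<lambda>t. c b * t powr real_of_int (h b)) \<longlongrightarrow> 0) (at_right 0)" if "b \<in> M" for b
    using that assms(2)
    by (intro tendsto_mult_right_zero tendsto_zero_powrI tendsto_ident_at tendsto_const
        eventually_at_rightI[of 0 1]) auto
  then have "((\<lambda>t. sum (lift_coeffs c h t) M) \<longlongrightarrow> 0) (at_right 0)"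
    unfolding lift_coeffs_def by (rule tendsto_null_sum)
  then have "\<forall>\<^sub>F t in at_right 0. t > 0 \<and> sum (lift_coeffs c h t) M < \<delta>"
    using assms(3) by (intro eventually_conj eventually_at_right_less order_tendstoD(2)) auto
  then show thesis
    using that eventually_happens[of _ "at_right (0::real)"] by auto
qed

lemma sum_lift_coeffs_large:
  assumes "finite M" "\<forall>b\<in>M. c b \<ge> 0" and b: "b \<in> M" "c b > 0" "h b > 0"
  obtains t where "t > 0" "B \<le> sum (lift_coeffs c h t) M"
proof
  define t where "t = max 1 (B / c b)"
  show "t > 0"
    by (simp add: t_def)
  have "B \<le> c b * t"
    using b(2) pos_divide_le_eq[of "c b" B t] by (simp add: t_def mult.commute)
  also have "\<dots> = c b * t powr 1"
    by (simp add: t_def)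
  also have "\<dots> \<le> lift_coeffs c h t b"
    unfolding lift_coeffs_def using b by (intro mult_left_mono powr_mono) (auto simp: t_def)
  also have "\<dots> \<le> sum (lift_coeffs c h t) M"
    using assms by (intro member_le_sum lift_coeffs_nonneg) auto
  finally show "B \<le> sum (lift_coeffs c h t) M" .
qed

lemma sum_lift_coeffs_dominated:
  assumes "finite M" "M \<noteq> {}" and c: "\<forall>b\<in>M. c b > 0" and h: "\<forall>b\<in>M. h b > 0"
    and "0 < cmin" "0 < e"
  obtains t1 T R where "0 < t1" "0 < T" "B \<le> sum (lift_coeffs c h T) M"
    and "\<And>t r. 0 < t \<Longrightarrow> t < t1 \<Longrightarrow> 0 \<le> r \<Longrightarrow> sum (lift_coeffs c h t) M < cmin * exp (e * r)"
    and "\<And>t r. 0 < t \<Longrightarrow> t \<le> T \<Longrightarrow> R < r \<Longrightarrow> sum (lift_coeffs c h t) M < cmin * exp (e * r)"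
proof -
  define Ct where "Ct t = sum (lift_coeffs c h t) M" for t
  have mono: "Ct s \<le> Ct t" if "0 < s" "s \<le> t" for s t
    unfolding Ct_def using c h that by (intro sum_lift_coeffs_mono) (auto simp: less_imp_le)
  obtain t1 where t1: "0 < t1" "Ct t1 < cmin"
    using sum_lift_coeffs_small[OF assms(1) h \<open>0 < cmin\<close>] unfolding Ct_def by blast
  obtain b where "b \<in> M"
    using \<open>M \<noteq> {}\<close> by blast
  then obtain T where T: "0 < T" "B \<le> Ct T"
    using sum_lift_coeffs_large[OF assms(1)] c h unfolding Ct_def by (metis less_imp_le)
  define R where "R = Ct T / (cmin * e)"
  show thesis
  proof (rule that[OF t1(1) T[unfolded Ct_def], of R, folded Ct_def])
    show "Ct t < cmin * exp (e * r)" if "0 < t" "t < t1" "0 \<le> r" for t r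
    proof -
      have "Ct t \<le> Ct t1"
        using mono that by simp
      also have "\<dots> < cmin * 1"
        using t1 by simp
      also have "\<dots> \<le> cmin * exp (e * r)"
        using \<open>0 < cmin\<close> \<open>0 < e\<close> that(3) by (intro mult_left_mono) auto
      finally show ?thesis .
    qed
    show "Ct t < cmin * exp (e * r)" if "0 < t" "t \<le> T" "R < r" for t r
    proof -
      have "Ct t \<le> cmin * e * R"
        using mono[OF that(1,2)] \<open>0 < cmin\<close> \<open>0 < e\<close> by (simp add: R_def)
      also have "\<dots> < cmin * (e * r)"
        using that(3) \<open>0 < cmin\<close> \<open>0 < e\<close> by simp
      also have "\<dots> < cmin * exp (e * r)"
        using \<open>0 < cmin\<close> by (intro mult_strict_left_mono) (auto intro: exp_gt_self)
      finally show ?thesis .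
    qed
  qed
qed

lemma exp_sum_level_exists_on:
  fixes P M :: "(int ^ 'n) set"
  assumes fin: "finite P" "finite M" and "M \<noteq> {}"
    and cmin: "0 < cmin" "\<forall>a\<in>P. cmin \<le> c a" and cM: "\<forall>b\<in>M. c b > 0" and h: "\<forall>b\<in>M. h b > 0"
    and L: "closed L" "0 \<in> L" and e: "e > 0"
    and gap: "\<forall>b\<in>M. \<forall>y\<in>L. \<exists>a\<in>P. rv b \<bullet> y + e * norm y \<le> rv a \<bullet> y"
  shows "\<exists>t>0. \<exists>y\<in>L. exp_sum M (lift_coeffs c h t) y = exp_sum P c y \<and>
           (\<forall>y\<in>L. exp_sum M (lift_coeffs c h t) y \<le> exp_sum P c y)"
proof -
  define G where "G t y = exp_sum P c y - exp_sum M (lift_coeffs c h t) y" for t y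
  have w: "\<forall>b\<in>M. 0 \<le> lift_coeffs c h t b" for t
    using cM by (simp add: lift_coeffs_nonneg less_imp_le)
  have pos: "0 < G t y" if "y \<in> L" "sum (lift_coeffs c h t) M < cmin * exp (e * norm y)" for t y
  proof -
    have "\<forall>b\<in>M. \<exists>a\<in>P. rv b \<bullet> y + e * norm y \<le> rv a \<bullet> y"
      using gap \<open>y \<in> L\<close> by simp
    then show ?thesis
      using exp_sum_less_if_gap[OF fin \<open>M \<noteq> {}\<close> cmin(2) w] that(2) unfolding G_def by simp
  qed
  obtain t1 T R where "0 < t1" "0 < T" "sum c P \<le> sum (lift_coeffs c h T) M"
    and small: "\<And>t r. 0 < t \<Longrightarrow> t < t1 \<Longrightarrow> 0 \<le> r \<Longrightarrow> sum (lift_coeffs c h t) M < cmin * exp (e * r)"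
    and large: "\<And>t r. 0 < t \<Longrightarrow> t \<le> T \<Longrightarrow> R < r \<Longrightarrow> sum (lift_coeffs c h t) M < cmin * exp (e * r)"
    using sum_lift_coeffs_dominated[OF fin(2) \<open>M \<noteq> {}\<close> cM h cmin(1) e] by blast
  have "\<exists>t>0. \<exists>y\<in>L. G t y = 0 \<and> (\<forall>y\<in>L. 0 \<le> G t y)"
  proof (rule least_level_with_zero[of G L t1 T R 0])
    show "continuous_on ({0<..} \<times> UNIV) (\<lambda>(t, y). G t y)"
      unfolding G_def exp_sum_def lift_coeffs_def case_prod_unfold by (intro continuous_intros) auto
    show "G T 0 \<le> 0"
      using \<open>sum c P \<le> sum (lift_coeffs c h T) M\<close> by (simp add: G_def exp_sum_def)
  qed (use L \<open>0 < t1\<close> \<open>0 < T\<close> pos small large in auto)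
  then show ?thesis
    unfolding G_def by (metis diff_ge_0_iff_ge eq_iff_diff_eq_0)
qed

lemma exp_sum_level_exists:
  fixes P M :: "(int ^ 'n) set"
  assumes fin: "finite P" "finite M" and "M \<noteq> {}"
    and relint: "rv ` M \<subseteq> rel_interior (convex hull (rv ` P))"
    and c: "\<forall>a\<in>P \<union> M. c a > 0" and h: "\<forall>b\<in>M. h b > 0"
  shows "\<exists>t>0. \<exists>y. exp_sum M (lift_coeffs c h t) y = exp_sum P c y \<and>
           (\<forall>y. exp_sum M (lift_coeffs c h t) y \<le> exp_sum P c y)"
proof -
  obtain a0 where a0: "a0 \<in> P"
    using relint \<open>M \<noteq> {}\<close> by fastforce
  define L where "L = span ((\<lambda>x. x - rv a0) ` rv ` P)"
  obtain e where "e > 0" and "\<forall>p\<in>rv ` M. \<forall>y\<in>L. \<exists>q\<in>rv ` P. p \<bullet> y + e * norm y \<le> q \<bullet> y"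
    using finite_rel_interior_inner_gap[OF finite_imageI[OF fin(2)] relint, of "rv a0"] a0
    unfolding L_def by blast
  then have gap: "\<forall>b\<in>M. \<forall>y\<in>L. \<exists>a\<in>P. rv b \<bullet> y + e * norm y \<le> rv a \<bullet> y"
    by blast
  define cmin where "cmin = Min (c ` P)"
  have "P \<noteq> {}"
    using a0 by blast
  then have cmin: "0 < cmin" "\<forall>a\<in>P. cmin \<le> c a"
    using fin(1) c by (simp_all add: cmin_def Min_gr_iff)
  have "closed L" "0 \<in> L"
    unfolding L_def by (simp_all add: closed_subspace span_zero)
  then obtain t where "t > 0" and level: "\<exists>y\<in>L. exp_sum M (lift_coeffs c h t) y = exp_sum P c y"
    and below: "\<forall>y\<in>L. exp_sum M (lift_coeffs c h t) y \<le> exp_sum P c y"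
    using exp_sum_level_exists_on[OF fin \<open>M \<noteq> {}\<close> cmin _ h _ _ \<open>e > 0\<close> gap] c by blast
  have "rv ` M \<subseteq> affine hull (rv ` P)"
    using relint rel_interior_subset convex_hull_subset_affine_hull by blast
  then have "\<forall>y. exp_sum M (lift_coeffs c h t) y \<le> exp_sum P c y"
    using exp_sum_le_if_le_on_direction[OF a0] below unfolding L_def by blast
  then show ?thesis
    using \<open>t > 0\<close> level by blast
qed

lemma crit_zero_level_exists:
  fixes P M :: "(int ^ 'n) set"
  assumes fin: "finite P" "finite M" and "M \<noteq> {}"
    and relint: "rv ` M \<subseteq> rel_interior (convex hull (rv ` P))"
    and c: "\<forall>a\<in>P \<union> M. c a > 0" and h: "\<forall>b\<in>M. h b > 0" "\<forall>a\<in>P. h a = 0"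
  shows "\<exists>t>0. \<exists>x. (\<forall>i. x $ i > 0) \<and> crit_system_zero P M (lift_coeffs c h t) x"
proof -
  obtain t y where "t > 0" and zero: "exp_sum M (lift_coeffs c h t) y = exp_sum P c y"
    and below: "\<forall>y. exp_sum M (lift_coeffs c h t) y \<le> exp_sum P c y"
    using exp_sum_level_exists[OF fin \<open>M \<noteq> {}\<close> relint c h(1)] by blast
  have "exp_sum P (lift_coeffs c h t) = exp_sum P c"
    using h(2) \<open>t > 0\<close> by (simp add: exp_sum_def lift_coeffs_unlifted fun_eq_iff)
  then have sig: "signomial P M (lift_coeffs c h t) x =
      exp_sum P c (ln_vec x) - exp_sum M (lift_coeffs c h t) (ln_vec x)" if "\<forall>i. x $ i > 0" for x
    using signomial_eq_exp_sum[OF that] by simp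
  have "crit_system_zero P M (lift_coeffs c h t) (exp_vec y)"
    using below zero by (intro crit_system_zero_if_global_min[OF _ fin]) (simp_all add: sig exp_vec_pos)
  then show ?thesis
    using \<open>t > 0\<close> exp_vec_pos by blast
qed

theorem theorem3p16:
  fixes Ap Am :: "(int ^ 'n) set" and \<Gamma> :: "(real ^ 'n) set"
    and c :: "int ^ 'n \<Rightarrow> real" and h :: "int ^ 'n \<Rightarrow> int"
  assumes "finite Ap" "finite Am" "Ap \<noteq> {}" "Am \<noteq> {}" "Ap \<inter> Am = {}"
    and "\<Gamma> face_of convex hull (rv ` Ap)"
    and "rv ` Am \<subseteq> rel_interior \<Gamma>"
    and "nonseparable {a\<in>Ap. rv a \<in> \<Gamma>} {a\<in>Am. rv a \<in> \<Gamma>}"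
    and "\<forall>a\<in>Ap \<union> Am. c a > 0"
    and "lifts h Ap Am"
  shows "\<exists>!t::real. t > 0 \<and>
    (\<exists>x::real ^ 'n. (\<forall>i. x $ i > 0) \<and>
       crit_system_zero {a\<in>Ap. rv a \<in> \<Gamma>} {a\<in>Am. rv a \<in> \<Gamma>}
         (\<lambda>a. c a * t powr real_of_int (h a)) x)"
proof -
  define P where "P = {a\<in>Ap. rv a \<in> \<Gamma>}"
  define M where "M = {a\<in>Am. rv a \<in> \<Gamma>}"
  have fin: "finite P" "finite M"
    using assms(1,2) by (simp_all add: P_def M_def)
  have "M \<noteq> {}"
    using assms(4,7) rel_interior_subset by (fastforce simp: M_def)
  have ns: "nonseparable P M"
    using assms(8) by (simp add: P_def M_def)
  have c: "\<forall>a\<in>P \<union> M. c a > 0" and h: "\<forall>b\<in>M. h b > 0" "\<forall>a\<in>P. h a = 0"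
    using assms(9,10) by (auto simp: P_def M_def lifts_def)
  show ?thesis
    unfolding P_def[symmetric] M_def[symmetric] lift_coeffs_def[symmetric]
  proof (rule ex_ex1I)
    show "\<exists>t. t > 0 \<and> (\<exists>x. (\<forall>i. x $ i > 0) \<and> crit_system_zero P M (lift_coeffs c h t) x)"
      using crit_zero_level_exists[OF fin \<open>M \<noteq> {}\<close> _ c h] ns by (auto simp: nonseparable_def)
  qed (use crit_zero_level_unique[OF fin \<open>M \<noteq> {}\<close> ns c h] in blast)
qed

end
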